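(* Let $D(s)=\sum_{n\ge1}a_nn^{-s}$ be a Dirichlet series with $\sigma_a(D)\le0$. Then $\mathcal{B}D$ has no zeros in $\mathbb{D}_0^\infty$ if and only if $a_1\ne0$ and $D$ has no zeros in $\mathbb{C}_0$. Consequently, if $a_1\ne0$ and $D$ has no zeros in $\mathbb{C}_0$, then for every completely multiplicative arithmetical function $\rho$ with $|\rho(n)|\le1$ for all $n$, the Dirichlet series $\sum_{n\ge1}a_n\rho(n)n^{-s}$ also has no zeros in $\mathbb{C}_0$.
   Context: $\sigma_a(D)$ is the abscissa of absolute convergence of $D$; $\mathbb{C}_0=\{\mathrm{Re}\,s>0\}$. Let $p_j$ be the $j$-th prime; for $n=p_1^{\alpha_1}\cdots p_N^{\alpha_N}$ write $\mathbf z^{\alpha(n)}=z_1^{\alpha_1}\cdots z_N^{\alpha_N}$. The Bohr transform is $\mathcal{B}D(\mathbf z)=\sum_{n\ge1}a_n\mathbf z^{\alpha(n)}$. $\mathbb{D}_0^\infty$ is the set of sequences $\mathbf z=(z_1,z_2,\dots)$ with $|z_j|<1$ for all $j$ and only finitely many nonzero entries; when $\sigma_a(D)\le0$, $\mathcal{B}D$ converges absolutely at every point of $\mathbb{D}_0^\infty$. A completely multiplicative function satisfies $\rho(1)=1$ and $\rho(mn)=\rho(m)\rho(n)$ for all $m,n$. *)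

theory Defs
  imports "HOL-Analysis.Analysis" "HOL-Computational_Algebra.Primes" "HOL-Library.Infinite_Set"
begin

(* Coefficients a :: nat => complex; only a n for n >= 1 matter (a 0 is ignored). *)

definition abs_conv_abscissa :: "(nat \<Rightarrow> complex) \<Rightarrow> ereal" where
  "abs_conv_abscissa a =
     Inf {ereal \<sigma> | \<sigma>. summable (\<lambda>n. norm (a (Suc n)) * real (Suc n) powr (-\<sigma>))}"

definition dirichlet_series :: "(nat \<Rightarrow> complex) \<Rightarrow> complex \<Rightarrow> complex" where
  "dirichlet_series a s = (\<Sum>n. a (Suc n) / of_nat (Suc n) powr s)"

(* j-th prime, 0-indexed: nth_prime 0 = 2, nth_prime 1 = 3, ... (p_{j+1} in the paper) *)
definition nth_prime :: "nat \<Rightarrow> nat" where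
  "nth_prime j = enumerate {p. prime p} j"

definition bohr_monomial :: "(nat \<Rightarrow> complex) \<Rightarrow> nat \<Rightarrow> complex" where
  "bohr_monomial z n = (\<Prod>j\<in>{j. nth_prime j dvd n}. z j ^ multiplicity (nth_prime j) n)"

definition bohr_transform :: "(nat \<Rightarrow> complex) \<Rightarrow> (nat \<Rightarrow> complex) \<Rightarrow> complex" where
  "bohr_transform a z = (\<Sum>n. a (Suc n) * bohr_monomial z (Suc n))"

definition D0_infty :: "(nat \<Rightarrow> complex) set" where
  "D0_infty = {z. (\<forall>j. norm (z j) < 1) \<and> finite {j. z j \<noteq> 0}}"

definition completely_multiplicative :: "(nat \<Rightarrow> complex) \<Rightarrow> bool" where
  "completely_multiplicative \<rho> \<longleftrightarrow>
     \<rho> 1 = 1 \<and> (\<forall>m n. m \<ge> 1 \<longrightarrow> n \<ge> 1 \<longrightarrow> \<rho> (m * n) = \<rho> m * \<rho> n)"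

end

theory Submission
  imports Defs "HOL-Complex_Analysis.Complex_Analysis" "HOL-Real_Asymp.Real_Asymp"
begin

text \<open>
  Write K(\<sigma>) for the compact polydisc of radii p_j^(-\<sigma>) (prime_polydisc). For \<sigma> > 0 the Bohr series
  converges absolutely and uniformly on K(\<sigma>), and BD(x_j p_j^(-s)) = \<Sum> a_n x^\<alpha>(n) n^(-s).
  In particular D(s) = BD(p_j^(-s)), and the twisted series is BD at (\<rho>(p_j) p_j^(-s)), a point
  of K(Re s). Each step of the argument is Hurwitz's theorem for a uniform limit of zero-free
  holomorphic functions; the limit is never identically zero because BD is close to a_1 far out.

  If BD has no zeros in the finitely supported unit polydisc, then a_1 = BD(0) \<noteq> 0, and D is
  the limit of the zero-free functions s \<mapsto> BD evaluated at truncations of (p_j^(-s)).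

  Conversely, suppose BD vanishes somewhere in K(\<sigma>), \<sigma> > 0. By compactness there is a largest
  such \<sigma>, with a zero \<zeta>. By maximality BD has no zeros in K(\<sigma> + \<epsilon>), which amounts to damping
  the coefficients to a_n n^(-\<epsilon>); so as a function of one interior coordinate z_j the transform
  vanishes on the whole disc, and all coordinates of \<zeta> can be moved to their boundary circles.
  This gives a zero (u_j p_j^(-\<sigma>)) with |u_j| = 1. As the ln p_j are linearly independent over
  the integers, Kronecker's theorem makes u a limit of (p_j^(-i T_k)), so this zero is a limit of
  the zero-free translates s \<mapsto> D(s + i T_k): a contradiction.
\<close>

section \<open>The prime enumeration\<close>

lemma infinite_primes_nat: "infinite {p::nat. prime p}"
  using primes_infinite by simp

lemma nth_prime_prime [simp]: "prime (nth_prime j)"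
  unfolding nth_prime_def using enumerate_in_set[OF infinite_primes_nat] by simp

lemma nth_prime_less_iff [simp]: "nth_prime i < nth_prime j \<longleftrightarrow> i < j"
  unfolding nth_prime_def using infinite_primes_nat by simp

lemma nth_prime_inject [simp]: "nth_prime i = nth_prime j \<longleftrightarrow> i = j"
  by (metis nat_neq_iff nth_prime_less_iff)

lemma nth_prime_gt_1 [simp]: "nth_prime j > 1"
  using prime_gt_1_nat nth_prime_prime by blast

lemma nth_prime_pos [simp]: "nth_prime j > 0"
  using nth_prime_gt_1[of j] by linarith

lemma nth_prime_nonzero [simp]: "nth_prime j \<noteq> 0"
  using nth_prime_pos[of j] by linarith

lemma less_nth_prime: "j < nth_prime j"
proof (induction j)
  case 0
  then show ?case by simp
next
  case (Suc j)
  then show ?case using nth_prime_less_iff[of j "Suc j"] by linarith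
qed

lemma prime_imp_ex_nth_prime: "prime p \<Longrightarrow> \<exists>j. nth_prime j = p"
  unfolding nth_prime_def using enumerate_Ex[OF infinite_primes_nat] by auto

lemma nth_prime_dvd_imp_less: "n > 0 \<Longrightarrow> nth_prime j dvd n \<Longrightarrow> j < n"
  using less_nth_prime[of j] dvd_imp_le by (meson less_le_trans)

lemma finite_nth_prime_dvd: "n > 0 \<Longrightarrow> finite {j. nth_prime j dvd n}"
  by (rule finite_subset[of _ "{..<n}"]) (auto dest: nth_prime_dvd_imp_less)

section \<open>Completely multiplicative functions and Bohr monomials\<close>

lemma completely_multiplicative_eqI:
  assumes "completely_multiplicative f" "completely_multiplicative g"
    and "\<And>p. prime p \<Longrightarrow> f p = g p" and "n > 0"
  shows "f n = g n"
  using \<open>n > 0\<close>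
proof (induction n rule: prime_divisors_induct)
  case (factor p n)
  then show ?case
    using assms(1,2,3) by (simp add: completely_multiplicative_def prime_gt_0_nat Suc_le_eq)
qed (use assms(1,2) in \<open>simp_all add: completely_multiplicative_def\<close>)

lemma completely_multiplicative_powr:
  "completely_multiplicative (\<lambda>n. of_nat n powr (s::complex))"
  unfolding completely_multiplicative_def by (simp add: powr_times_real)

lemma norm_of_nat_powr: "norm (of_nat n powr (s::complex)) = real n powr Re s"
  by (simp add: norm_powr_real_powr)

lemma norm_of_nat_powr_le_1:
  assumes "\<epsilon> \<ge> 0"
  shows "norm (of_nat n powr (- of_real \<epsilon>) :: complex) \<le> 1"
proof (cases "n = 0")
  case False
  then have "real n powr (- \<epsilon>) \<le> real n powr 0"
    using assms by (intro powr_mono) auto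
  with False show ?thesis by (simp add: norm_of_nat_powr)
qed simp

lemma tendsto_of_nat_powr_one:
  assumes "n > 0" "\<epsilon> \<longlonglongrightarrow> 0"
  shows "(\<lambda>k. of_nat n powr (- of_real (\<epsilon> k)) :: complex) \<longlonglongrightarrow> 1"
proof -
  have "(\<lambda>k. exp (- of_real (\<epsilon> k) * ln (of_nat n :: complex))) \<longlonglongrightarrow> exp (- of_real 0 * ln (of_nat n))"
    by (intro tendsto_intros assms(2))
  then show ?thesis using assms(1) by (simp add: powr_def)
qed

lemma bohr_monomial_eq_prod:
  assumes "finite J" "{j. nth_prime j dvd n} \<subseteq> J"
  shows "bohr_monomial z n = (\<Prod>j\<in>J. z j ^ multiplicity (nth_prime j) n)"
  unfolding bohr_monomial_def
  by (rule prod.mono_neutral_left) (use assms in \<open>auto simp: not_dvd_imp_multiplicity_0\<close>)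

lemma bohr_monomial_mult:
  assumes "m > 0" "n > 0"
  shows "bohr_monomial z (m * n) = bohr_monomial z m * bohr_monomial z n"
proof -
  define J where "J = {j. nth_prime j dvd m * n}"
  have J: "finite J" using assms by (simp add: J_def finite_nth_prime_dvd)
  have "bohr_monomial z (m * n) = (\<Prod>j\<in>J. z j ^ multiplicity (nth_prime j) (m * n))"
    by (rule bohr_monomial_eq_prod[OF J]) (simp add: J_def)
  also have "\<dots> = (\<Prod>j\<in>J. z j ^ multiplicity (nth_prime j) m * z j ^ multiplicity (nth_prime j) n)"
    using assms by (simp add: prime_elem_multiplicity_mult_distrib power_add)
  also have "\<dots> = bohr_monomial z m * bohr_monomial z n"
    unfolding prod.distrib using assms
    by (subst (1 2) bohr_monomial_eq_prod[OF J]) (auto simp: J_def)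
  finally show ?thesis .
qed

lemma bohr_monomial_1 [simp]: "bohr_monomial z (Suc 0) = 1"
  by (simp add: bohr_monomial_def)

lemma completely_multiplicative_bohr_monomial: "completely_multiplicative (bohr_monomial z)"
  unfolding completely_multiplicative_def by (simp add: bohr_monomial_mult Suc_le_eq)

lemma bohr_monomial_nth_prime [simp]: "bohr_monomial z (nth_prime j) = z j"
proof -
  have "bohr_monomial z (nth_prime j) = (\<Prod>i\<in>{j}. z i ^ multiplicity (nth_prime i) (nth_prime j))"
    by (rule bohr_monomial_eq_prod) (auto dest: primes_dvd_imp_eq[OF nth_prime_prime nth_prime_prime])
  then show ?thesis by (simp add: multiplicity_self)
qed

lemma bohr_monomial_completely_multiplicative:
  assumes "completely_multiplicative f" "n > 0"
  shows "bohr_monomial (\<lambda>j. f (nth_prime j)) n = f n"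
proof (rule completely_multiplicative_eqI[OF completely_multiplicative_bohr_monomial assms(1) _ assms(2)])
  fix p :: nat assume "prime p"
  then obtain j where "nth_prime j = p" using prime_imp_ex_nth_prime by blast
  then show "bohr_monomial (\<lambda>j. f (nth_prime j)) p = f p" by auto
qed

lemma bohr_monomial_times:
  "bohr_monomial (\<lambda>j. x j * y j) n = bohr_monomial x n * bohr_monomial y n"
  by (simp add: bohr_monomial_def power_mult_distrib prod.distrib)

lemma bohr_monomial_one [simp]: "bohr_monomial (\<lambda>_. 1) n = 1"
  by (simp add: bohr_monomial_def)

lemma bohr_monomial_prime_powr:
  "n > 0 \<Longrightarrow> bohr_monomial (\<lambda>j. x j * of_nat (nth_prime j) powr s) n = bohr_monomial x n * of_nat n powr s"
  using bohr_monomial_completely_multiplicative[OF completely_multiplicative_powr, of n s]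
  by (simp add: bohr_monomial_times)

lemma bohr_monomial_zero:
  assumes "n > 1"
  shows "bohr_monomial (\<lambda>_. 0) n = 0"
proof -
  obtain p where "prime p" "p dvd n" using prime_factor_nat[of n] assms by auto
  moreover obtain j where "nth_prime j = p" using prime_imp_ex_nth_prime[OF \<open>prime p\<close>] by blast
  ultimately have "n = nth_prime j * (n div p)" "n div p > 0"
    using assms by (auto simp: div_greater_zero_iff dvd_imp_le)
  then show ?thesis by (metis bohr_monomial_mult bohr_monomial_nth_prime mult_zero_left nth_prime_pos)
qed

lemma norm_bohr_monomial_mono:
  "(\<And>j. norm (x j) \<le> norm (y j)) \<Longrightarrow> norm (bohr_monomial x n) \<le> norm (bohr_monomial y n)"
  unfolding bohr_monomial_def prod_norm[symmetric] norm_power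
  by (intro prod_mono) (auto simp: power_mono)

lemma norm_bohr_monomial_le_1:
  "(\<And>j. norm (x j) \<le> 1) \<Longrightarrow> norm (bohr_monomial x n) \<le> 1"
  using norm_bohr_monomial_mono[of x "\<lambda>_. 1" n] by (simp add: bohr_monomial_def)

lemma tendsto_bohr_monomial [tendsto_intros]:
  "(\<And>j. ((\<lambda>k. x k j) \<longlongrightarrow> y j) F) \<Longrightarrow> ((\<lambda>k. bohr_monomial (x k) n) \<longlongrightarrow> bohr_monomial y n) F"
  unfolding bohr_monomial_def by (intro tendsto_intros)

lemma holomorphic_on_bohr_monomial:
  "(\<And>j. (\<lambda>s. \<phi> s j) holomorphic_on S) \<Longrightarrow> (\<lambda>s. bohr_monomial (\<phi> s) n) holomorphic_on S"
  unfolding bohr_monomial_def by (intro holomorphic_intros)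

section \<open>Absolute convergence on polydiscs\<close>

definition dirichlet_abs_summable :: "(nat \<Rightarrow> complex) \<Rightarrow> real \<Rightarrow> bool" where
  "dirichlet_abs_summable a \<sigma> \<longleftrightarrow> summable (\<lambda>n. norm (a (Suc n)) * real (Suc n) powr (-\<sigma>))"

lemma dirichlet_abs_summable_dominated:
  assumes "dirichlet_abs_summable a \<sigma>" "\<And>n. n > 0 \<Longrightarrow> norm (b n) \<le> C * norm (a n)"
  shows "dirichlet_abs_summable b \<sigma>"
  using summable_mult[OF assms(1)[unfolded dirichlet_abs_summable_def], of C]
  unfolding dirichlet_abs_summable_def
  by (elim summable_comparison_test') (simp add: mult.assoc[symmetric] mult_right_mono assms(2) del: of_nat_Suc)

lemma dirichlet_abs_summable_mono:
  assumes "dirichlet_abs_summable a \<sigma>" "\<sigma> \<le> \<sigma>'"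
  shows "dirichlet_abs_summable a \<sigma>'"
  using assms unfolding dirichlet_abs_summable_def
  by (elim summable_comparison_test') (simp add: mult_left_mono powr_mono)

lemma dirichlet_abs_summable_gt_abscissa:
  assumes "abs_conv_abscissa a < ereal \<sigma>"
  shows "dirichlet_abs_summable a \<sigma>"
proof -
  obtain \<tau> where "dirichlet_abs_summable a \<tau>" "\<tau> < \<sigma>"
    using assms unfolding abs_conv_abscissa_def Inf_less_iff dirichlet_abs_summable_def by auto
  then show ?thesis by (meson dirichlet_abs_summable_mono less_imp_le)
qed

definition prime_polydisc :: "real \<Rightarrow> (nat \<Rightarrow> complex) set" where
  "prime_polydisc \<sigma> = {z. \<forall>j. norm (z j) \<le> real (nth_prime j) powr (-\<sigma>)}"

lemma prime_polydisc_antimono: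
  assumes "\<sigma> \<le> \<sigma>'"
  shows "prime_polydisc \<sigma>' \<subseteq> prime_polydisc \<sigma>"
proof -
  have "real (nth_prime j) powr (-\<sigma>') \<le> real (nth_prime j) powr (-\<sigma>)" for j
    using assms less_imp_le[OF nth_prime_gt_1] by (intro powr_mono) auto
  then show ?thesis unfolding prime_polydisc_def by (auto intro: order.trans)
qed

lemma compact_prime_polydisc: "compact (prime_polydisc \<sigma>)"
proof -
  have "prime_polydisc \<sigma> = PiE UNIV (\<lambda>j. cball 0 (real (nth_prime j) powr (-\<sigma>)))"
    by (auto simp: prime_polydisc_def PiE_def Pi_def)
  moreover have "compactin (product_topology (\<lambda>_. euclidean) UNIV)
      (PiE UNIV (\<lambda>j. cball (0::complex) (real (nth_prime j) powr (-\<sigma>))))"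
    by (simp add: compactin_PiE)
  ultimately show ?thesis
    by (simp add: euclidean_product_topology)
qed

lemma fun_upd_in_prime_polydisc:
  "z \<in> prime_polydisc \<sigma> \<Longrightarrow> norm w \<le> real (nth_prime j) powr (-\<sigma>) \<Longrightarrow> z(j := w) \<in> prime_polydisc \<sigma>"
  by (auto simp: prime_polydisc_def)

lemma in_prime_polydisc_0_iff: "z \<in> prime_polydisc 0 \<longleftrightarrow> (\<forall>j. norm (z j) \<le> 1)"
  by (simp add: prime_polydisc_def)

lemma prime_scaled_in_prime_polydisc:
  assumes "z \<in> prime_polydisc \<sigma>"
  shows "(\<lambda>j. z j * of_nat (nth_prime j) powr (-s)) \<in> prime_polydisc (\<sigma> + Re s)"
  unfolding prime_polydisc_def
proof safe
  fix j
  have "norm (z j * of_nat (nth_prime j) powr (-s)) = norm (z j) * real (nth_prime j) powr (- Re s)"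
    by (simp add: norm_mult norm_of_nat_powr)
  also have "\<dots> \<le> real (nth_prime j) powr (-\<sigma>) * real (nth_prime j) powr (- Re s)"
    using assms by (intro mult_right_mono) (auto simp: prime_polydisc_def)
  finally show "norm (z j * of_nat (nth_prime j) powr (-s)) \<le> real (nth_prime j) powr - (\<sigma> + Re s)"
    by (simp add: powr_add[symmetric])
qed

lemma prime_powr_in_prime_polydisc:
  "(\<lambda>j. of_nat (nth_prime j) powr (-s)) \<in> prime_polydisc (Re s)"
  using prime_scaled_in_prime_polydisc[of "\<lambda>_. 1" 0 s] by (simp add: in_prime_polydisc_0_iff)

lemma D0_infty_imp_in_prime_polydisc:
  assumes "z \<in> D0_infty"
  obtains \<sigma> where "\<sigma> > 0" "z \<in> prime_polydisc \<sigma>"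
proof -
  have fin: "finite {j. z j \<noteq> 0}" and lt: "\<And>j. norm (z j) < 1"
    using assms by (auto simp: D0_infty_def)
  have "eventually (\<lambda>\<sigma>. norm (z j) < real (nth_prime j) powr (-\<sigma>)) (at_right 0)" for j
  proof -
    have "((\<lambda>\<sigma>. real (nth_prime j) powr (-\<sigma>)) \<longlongrightarrow> 1) (at_right 0)"
      by (rule tendsto_eq_intros refl | simp)+
    then show ?thesis using lt[of j] by (intro order_tendstoD) auto
  qed
  then have "eventually (\<lambda>\<sigma>. \<sigma> > 0 \<and> (\<forall>j\<in>{j. z j \<noteq> 0}. norm (z j) < real (nth_prime j) powr (-\<sigma>))) (at_right 0)"
    using fin eventually_at_right_less by (intro eventually_conj eventually_ball_finite) auto
  then obtain \<sigma> where "\<sigma> > 0" and \<sigma>: "\<forall>j\<in>{j. z j \<noteq> 0}. norm (z j) < real (nth_prime j) powr (-\<sigma>)"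
    using eventually_happens'[OF trivial_limit_at_right_real] by blast
  moreover have "norm (z j) \<le> real (nth_prime j) powr (-\<sigma>)" for j
    using \<sigma> by (cases "z j = 0") auto
  ultimately show ?thesis
    by (intro that[of \<sigma>]) (auto simp: prime_polydisc_def)
qed

lemma norm_bohr_monomial_le_powr:
  assumes "z \<in> prime_polydisc \<sigma>" "n > 0"
  shows "norm (bohr_monomial z n) \<le> real n powr (-\<sigma>)"
proof -
  have "norm (bohr_monomial z n) \<le> norm (bohr_monomial (\<lambda>j. of_nat (nth_prime j) powr (- of_real \<sigma>)) n)"
    using assms(1) by (intro norm_bohr_monomial_mono) (simp add: prime_polydisc_def norm_of_nat_powr)
  also have "\<dots> = real n powr (-\<sigma>)"
    using assms(2) by (simp add: bohr_monomial_completely_multiplicative[OF completely_multiplicative_powr] norm_of_nat_powr)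
  finally show ?thesis .
qed

lemma norm_bohr_transform_term_le:
  assumes "z \<in> prime_polydisc \<sigma>"
  shows "norm (a (Suc n) * bohr_monomial z (Suc n)) \<le> norm (a (Suc n)) * real (Suc n) powr (-\<sigma>)"
  unfolding norm_mult by (intro mult_left_mono norm_bohr_monomial_le_powr assms) auto

lemma summable_norm_bohr_transform:
  assumes "dirichlet_abs_summable a \<sigma>" "z \<in> prime_polydisc \<sigma>"
  shows "summable (\<lambda>n. norm (a (Suc n) * bohr_monomial z (Suc n)))"
  using assms(1) unfolding dirichlet_abs_summable_def
  by (rule summable_comparison_test') (use norm_bohr_transform_term_le[OF assms(2)] in auto)

lemma norm_bohr_transform_le:
  assumes "dirichlet_abs_summable a \<sigma>" "z \<in> prime_polydisc \<sigma>"
  shows "norm (bohr_transform a z) \<le> (\<Sum>n. norm (a (Suc n)) * real (Suc n) powr (-\<sigma>))"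
proof -
  have "norm (bohr_transform a z) \<le> (\<Sum>n. norm (a (Suc n) * bohr_monomial z (Suc n)))"
    unfolding bohr_transform_def by (rule summable_norm[OF summable_norm_bohr_transform[OF assms]])
  also have "\<dots> \<le> (\<Sum>n. norm (a (Suc n)) * real (Suc n) powr (-\<sigma>))"
    using assms(1) unfolding dirichlet_abs_summable_def
    by (intro suminf_le norm_bohr_transform_term_le[OF assms(2)] summable_norm_bohr_transform[OF assms])
  finally show ?thesis .
qed

lemma bohr_transform_diff:
  assumes "dirichlet_abs_summable a \<sigma>" "dirichlet_abs_summable b \<sigma>" "z \<in> prime_polydisc \<sigma>"
  shows "bohr_transform a z - bohr_transform b z = bohr_transform (\<lambda>n. a n - b n) z"
  unfolding bohr_transform_def
  using suminf_diff[OF summable_norm_cancel[OF summable_norm_bohr_transform[OF assms(1,3)]]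
                       summable_norm_cancel[OF summable_norm_bohr_transform[OF assms(2,3)]]]
  by (simp add: algebra_simps)

lemma bohr_transform_eq_head:
  assumes "\<And>n. n > 1 \<Longrightarrow> a n * bohr_monomial z n = 0"
  shows "bohr_transform a z = a 1"
proof -
  have "(\<lambda>n. a (Suc n) * bohr_monomial z (Suc n)) = (\<lambda>n. if n = 0 then a 1 else 0)"
    using assms by (auto simp: fun_eq_iff)
  then show ?thesis
    unfolding bohr_transform_def using sums_single[of 0 "\<lambda>_. a 1"] by (simp add: sums_iff)
qed

lemma bohr_transform_zero_point: "bohr_transform a (\<lambda>_. 0) = a 1"
  by (rule bohr_transform_eq_head) (simp add: bohr_monomial_zero)

lemma bohr_transform_prime_scaled:
  "bohr_transform a (\<lambda>j. x j * of_nat (nth_prime j) powr s) =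
   (\<Sum>n. a (Suc n) * bohr_monomial x (Suc n) * of_nat (Suc n) powr s)"
  unfolding bohr_transform_def by (simp add: bohr_monomial_prime_powr mult.assoc del: of_nat_Suc)

lemma bohr_transform_prime_scaled_eq_powr_coeffs:
  "bohr_transform a (\<lambda>j. y j * of_nat (nth_prime j) powr s) =
   bohr_transform (\<lambda>n. a n * of_nat n powr s) y"
  unfolding bohr_transform_prime_scaled by (simp add: bohr_transform_def mult_ac)

lemma bohr_transform_prime_scaled_eq_monomial_coeffs:
  "bohr_transform a (\<lambda>j. y j * of_nat (nth_prime j) powr s) =
   bohr_transform (\<lambda>n. a n * bohr_monomial y n) (\<lambda>j. of_nat (nth_prime j) powr s)"
  using bohr_transform_prime_scaled[of a y s]
    bohr_transform_prime_scaled[of "\<lambda>n. a n * bohr_monomial y n" "\<lambda>_. 1" s] by simp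

lemma dirichlet_series_eq_bohr_transform:
  "dirichlet_series (\<lambda>n. a n * bohr_monomial x n) s =
   bohr_transform a (\<lambda>j. x j * of_nat (nth_prime j) powr (-s))"
  unfolding bohr_transform_prime_scaled dirichlet_series_def
  by (simp add: powr_minus divide_inverse del: of_nat_Suc)

lemma tendsto_bohr_transform:
  assumes a: "dirichlet_abs_summable a \<sigma>" and y: "eventually (\<lambda>k. y k \<in> prime_polydisc \<sigma>) F"
    and lim: "\<And>j. ((\<lambda>k. y k j) \<longlongrightarrow> y' j) F" and F: "F \<noteq> bot"
  shows "((\<lambda>k. bohr_transform a (y k)) \<longlongrightarrow> bohr_transform a y') F"
proof -
  have "\<forall>\<^sub>F (n, k) in (at_top :: nat filter) \<times>\<^sub>F F. y k \<in> prime_polydisc \<sigma>"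
    using eventually_prod2[of "at_top :: nat filter" "\<lambda>k. y k \<in> prime_polydisc \<sigma>" F] y by simp
  then have bound: "\<forall>\<^sub>F (n, k) in at_top \<times>\<^sub>F F.
      norm (a (Suc n) * bohr_monomial (y k) (Suc n)) \<le> norm (a (Suc n)) * real (Suc n) powr (-\<sigma>)"
    by (rule eventually_mono) (auto simp del: of_nat_Suc intro: norm_bohr_transform_term_le)
  have "((\<lambda>k. a (Suc n) * bohr_monomial (y k) (Suc n)) \<longlongrightarrow> a (Suc n) * bohr_monomial y' (Suc n)) F"
    for n by (intro tendsto_intros lim)
  from tannerys_theorem[OF this bound a[unfolded dirichlet_abs_summable_def] F]
  show ?thesis
    unfolding bohr_transform_def by blast
qed

lemma holomorphic_on_bohr_transform:
  assumes "dirichlet_abs_summable a \<sigma>" "open S" "\<And>s. s \<in> S \<Longrightarrow> \<phi> s \<in> prime_polydisc \<sigma>"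
    and "\<And>j. (\<lambda>s. \<phi> s j) holomorphic_on S"
  shows "(\<lambda>s. bohr_transform a (\<phi> s)) holomorphic_on S"
proof -
  define f where "f = (\<lambda>n s. a (Suc n) * bohr_monomial (\<phi> s) (Suc n))"
  have ul: "uniform_limit S (\<lambda>N s. \<Sum>n<N. f n s) (\<lambda>s. \<Sum>n. f n s) sequentially"
    using norm_bohr_transform_term_le assms(3)
    by (intro Weierstrass_m_test[OF _ assms(1)[unfolded dirichlet_abs_summable_def]]) (auto simp: f_def)
  have "(\<lambda>s. \<Sum>n. f n s) holomorphic_on S"
  proof (rule holomorphic_uniform_sequence[OF assms(2)])
    show "(\<lambda>s. \<Sum>n<N. f n s) holomorphic_on S" for N
      unfolding f_def by (intro holomorphic_intros holomorphic_on_bohr_monomial assms(4))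
    show "\<exists>d>0. cball s d \<subseteq> S \<and> uniform_limit (cball s d) (\<lambda>N s. \<Sum>n<N. f n s) (\<lambda>s. \<Sum>n. f n s) sequentially"
      if "s \<in> S" for s
      using that assms(2) uniform_limit_on_subset[OF ul] open_contains_cball by metis
  qed
  then show ?thesis unfolding f_def bohr_transform_def .
qed

lemma uniform_limit_bohr_transform_coeffs:
  assumes a: "dirichlet_abs_summable a \<sigma>"
    and b: "\<And>k n. n > 0 \<Longrightarrow> norm (b k n) \<le> norm (a n)"
    and c: "\<And>n. n > 0 \<Longrightarrow> norm (c n) \<le> norm (a n)"
    and lim: "\<And>n. n > 0 \<Longrightarrow> (\<lambda>k. b k n) \<longlonglongrightarrow> c n"
  shows "uniform_limit (prime_polydisc \<sigma>) (\<lambda>k. bohr_transform (b k)) (bohr_transform c) sequentially"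
proof -
  define \<eta> where "\<eta> k = (\<Sum>n. norm (b k (Suc n) - c (Suc n)) * real (Suc n) powr (-\<sigma>))" for k
  have diff_le: "norm (b k n - c n) \<le> 2 * norm (a n)" if "n > 0" for k n
    using norm_triangle_ineq4[of "b k n" "c n"] b[OF that, of k] c[OF that] by linarith
  have bk: "dirichlet_abs_summable (b k) \<sigma>" for k
    by (rule dirichlet_abs_summable_dominated[OF a, of _ 1]) (simp add: b)
  have c': "dirichlet_abs_summable c \<sigma>"
    by (rule dirichlet_abs_summable_dominated[OF a, of _ 1]) (simp add: c)
  have "dist (bohr_transform (b k) z) (bohr_transform c z) \<le> \<eta> k" if "z \<in> prime_polydisc \<sigma>" for k z
  proof -
    have "dist (bohr_transform (b k) z) (bohr_transform c z) = norm (bohr_transform (\<lambda>n. b k n - c n) z)"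
      unfolding dist_norm using bohr_transform_diff[OF bk c' that] by simp
    also have "\<dots> \<le> \<eta> k"
      unfolding \<eta>_def using that
      by (intro norm_bohr_transform_le dirichlet_abs_summable_dominated[OF a diff_le])
    finally show ?thesis .
  qed
  moreover have "\<eta> \<longlonglongrightarrow> 0"
  proof -
    have lim0: "(\<lambda>k. norm (b k (Suc n) - c (Suc n)) * real (Suc n) powr (-\<sigma>)) \<longlonglongrightarrow> 0" for n
      using tendsto_mult_right[OF tendsto_norm[OF LIM_zero[OF lim[of "Suc n"]]]] by simp
    have bound: "\<forall>\<^sub>F (n, k) in at_top \<times>\<^sub>F sequentially.
        norm (norm (b k (Suc n) - c (Suc n)) * real (Suc n) powr (-\<sigma>))
          \<le> 2 * (norm (a (Suc n)) * real (Suc n) powr (-\<sigma>))"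
      using diff_le by (intro always_eventually) (auto simp: mult.assoc[symmetric] mult_right_mono simp del: of_nat_Suc)
    have "summable (\<lambda>n. 2 * (norm (a (Suc n)) * real (Suc n) powr (-\<sigma>)))"
      using a by (simp add: dirichlet_abs_summable_def summable_mult)
    from tannerys_theorem[OF lim0 bound this] show ?thesis
      unfolding \<eta>_def by simp
  qed
  ultimately show ?thesis
    by (intro uniform_limitI, elim order_tendstoD(2)[THEN eventually_mono])
      (auto intro: le_less_trans)
qed

lemma powr_le_two_powr:
  fixes m :: nat and t :: real
  assumes "m \<ge> 2" "t \<ge> 0"
  shows "real m powr (-(\<sigma> + t)) \<le> 2 powr (-t) * real m powr (-\<sigma>)"
proof -
  have "real m powr (-(\<sigma> + t)) = real m powr (-\<sigma>) * real m powr (-t)"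
    by (simp add: powr_add[symmetric])
  also have "\<dots> \<le> real m powr (-\<sigma>) * 2 powr (-t)"
    using assms by (intro mult_left_mono powr_mono2') auto
  finally show ?thesis by (simp add: mult.commute)
qed

lemma norm_bohr_transform_minus_head_le:
  assumes a: "dirichlet_abs_summable a \<sigma>" and "t \<ge> 0" and z: "z \<in> prime_polydisc (\<sigma> + t)"
  shows "norm (bohr_transform a z - a 1) \<le> 2 powr (-t) * (\<Sum>n. norm (a (Suc n)) * real (Suc n) powr (-\<sigma>))"
proof -
  define h where "h n = (if n = 1 then a 1 else 0)" for n :: nat
  have a': "dirichlet_abs_summable a (\<sigma> + t)"
    using dirichlet_abs_summable_mono[OF a, of "\<sigma> + t"] \<open>t \<ge> 0\<close> by simp
  have "bohr_transform a z - a 1 = bohr_transform (\<lambda>n. a n - h n) z"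
    using bohr_transform_diff[OF a' dirichlet_abs_summable_dominated[OF a', of h 1] z]
      bohr_transform_eq_head[of h z] by (simp add: h_def)
  also have "norm \<dots> \<le> (\<Sum>n. norm (a (Suc n) - h (Suc n)) * real (Suc n) powr (-(\<sigma> + t)))"
    by (rule norm_bohr_transform_le[OF dirichlet_abs_summable_dominated[OF a', of _ 1] z])
      (simp add: h_def)
  also have "\<dots> \<le> (\<Sum>n. 2 powr (-t) * (norm (a (Suc n)) * real (Suc n) powr (-\<sigma>)))"
  proof (rule suminf_le)
    show "norm (a (Suc n) - h (Suc n)) * real (Suc n) powr (-(\<sigma> + t))
          \<le> 2 powr (-t) * (norm (a (Suc n)) * real (Suc n) powr (-\<sigma>))" for n
    proof (cases n)
      case (Suc m)
      then have "norm (a (Suc n)) * real (Suc n) powr (-(\<sigma> + t))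
                 \<le> norm (a (Suc n)) * (2 powr (-t) * real (Suc n) powr (-\<sigma>))"
        using \<open>t \<ge> 0\<close> by (intro mult_left_mono powr_le_two_powr) auto
      then show ?thesis using Suc by (simp add: h_def mult_ac)
    qed (simp add: h_def)
    show "summable (\<lambda>n. norm (a (Suc n) - h (Suc n)) * real (Suc n) powr (-(\<sigma> + t)))"
      using dirichlet_abs_summable_dominated[OF a', of "\<lambda>n. a n - h n" 1]
      by (simp add: h_def dirichlet_abs_summable_def)
    show "summable (\<lambda>n. 2 powr (-t) * (norm (a (Suc n)) * real (Suc n) powr (-\<sigma>)))"
      using a by (simp add: dirichlet_abs_summable_def summable_mult)
  qed
  also have "\<dots> = 2 powr (-t) * (\<Sum>n. norm (a (Suc n)) * real (Suc n) powr (-\<sigma>))"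
    using a by (simp add: dirichlet_abs_summable_def suminf_mult)
  finally show ?thesis .
qed

lemma bohr_transform_nonzero_far:
  assumes a: "dirichlet_abs_summable a \<sigma>" and "a 1 \<noteq> 0"
  obtains \<sigma>\<^sub>0 where "\<And>\<tau> z. \<tau> \<ge> \<sigma>\<^sub>0 \<Longrightarrow> z \<in> prime_polydisc \<tau> \<Longrightarrow> bohr_transform a z \<noteq> 0"
proof -
  define A where "A = (\<Sum>n. norm (a (Suc n)) * real (Suc n) powr (-\<sigma>))"
  have "((\<lambda>t::real. 2 powr (-t) * A) \<longlongrightarrow> 0) at_top" by real_asymp
  then have "eventually (\<lambda>t. 2 powr (-t) * A < norm (a 1)) at_top"
    using \<open>a 1 \<noteq> 0\<close> by (intro order_tendstoD) auto
  then obtain t\<^sub>0 where t\<^sub>0: "\<And>t. t \<ge> t\<^sub>0 \<Longrightarrow> 2 powr (-t) * A < norm (a 1)"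
    unfolding eventually_at_top_linorder by blast
  show ?thesis
  proof (rule that[of "\<sigma> + max t\<^sub>0 0"])
    fix \<tau> z assume "\<tau> \<ge> \<sigma> + max t\<^sub>0 0" "z \<in> prime_polydisc \<tau>"
    then have "norm (bohr_transform a z - a 1) \<le> 2 powr (-(\<tau> - \<sigma>)) * A"
      unfolding A_def by (intro norm_bohr_transform_minus_head_le[OF a]) auto
    also have "\<dots> < norm (a 1)"
      using \<open>\<tau> \<ge> \<sigma> + max t\<^sub>0 0\<close> by (intro t\<^sub>0) simp
    finally have "norm (bohr_transform a z - a 1) < norm (a 1)" .
    then show "bohr_transform a z \<noteq> 0" by auto
  qed
qed

lemma bohr_transform_prime_powr_nonzero_far:
  assumes "dirichlet_abs_summable a \<sigma>" "a 1 \<noteq> 0"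
  obtains \<tau> where "\<tau> > \<sigma>" "bohr_transform a (\<lambda>j. of_nat (nth_prime j) powr (- of_real \<tau>)) \<noteq> 0"
proof -
  obtain \<sigma>\<^sub>0 where far: "\<And>\<tau> z. \<tau> \<ge> \<sigma>\<^sub>0 \<Longrightarrow> z \<in> prime_polydisc \<tau> \<Longrightarrow> bohr_transform a z \<noteq> 0"
    using bohr_transform_nonzero_far[OF assms] by blast
  show ?thesis
    using far[of "max \<sigma>\<^sub>0 (\<sigma> + 1)"] prime_powr_in_prime_polydisc[of "of_real (max \<sigma>\<^sub>0 (\<sigma> + 1))"]
    by (intro that[of "max \<sigma>\<^sub>0 (\<sigma> + 1)"]) auto
qed

section \<open>Hurwitz arguments and the maximal zero\<close>

lemma bohr_transform_hurwitz:
  assumes a: "dirichlet_abs_summable a \<sigma>"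
    and b: "\<And>k n. n > 0 \<Longrightarrow> norm (b k n) \<le> norm (a n)"
    and c: "\<And>n. n > 0 \<Longrightarrow> norm (c n) \<le> norm (a n)"
    and lim: "\<And>n. n > 0 \<Longrightarrow> (\<lambda>k. b k n) \<longlonglongrightarrow> c n"
    and S: "open S" "connected S" and \<phi>: "\<And>s. s \<in> S \<Longrightarrow> \<phi> s \<in> prime_polydisc \<sigma>"
    and hol: "\<And>j. (\<lambda>s. \<phi> s j) holomorphic_on S"
    and nz: "\<And>k s. s \<in> S \<Longrightarrow> bohr_transform (b k) (\<phi> s) \<noteq> 0"
    and zero: "s\<^sub>0 \<in> S" "bohr_transform c (\<phi> s\<^sub>0) = 0"
  shows "(\<lambda>s. bohr_transform c (\<phi> s)) constant_on S"
proof (rule ccontr)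
  assume nonconst: "\<not> (\<lambda>s. bohr_transform c (\<phi> s)) constant_on S"
  have hol_b: "(\<lambda>s. bohr_transform (b k) (\<phi> s)) holomorphic_on S" for k
    using dirichlet_abs_summable_dominated[OF a, of "b k" 1] b
    by (intro holomorphic_on_bohr_transform[OF _ S(1) \<phi> hol]) simp
  have hol_c: "(\<lambda>s. bohr_transform c (\<phi> s)) holomorphic_on S"
    using dirichlet_abs_summable_dominated[OF a, of c 1] c
    by (intro holomorphic_on_bohr_transform[OF _ S(1) \<phi> hol]) simp
  have "uniform_limit K (\<lambda>k s. bohr_transform (b k) (\<phi> s)) (\<lambda>s. bohr_transform c (\<phi> s)) sequentially"
    if "K \<subseteq> S" for K
    using that \<phi> by (intro uniform_limit_compose'[OF uniform_limit_bohr_transform_coeffs[OF a b c lim]]) auto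
  from Hurwitz_no_zeros[OF S hol_b hol_c this nonconst nz zero(1)] zero(2) show False
    by simp
qed

lemma bohr_transform_prime_scaled_limit_nonzero:
  assumes a: "dirichlet_abs_summable a \<sigma>" and a1: "a 1 \<noteq> 0"
    and x: "\<And>k j. norm (x k j) \<le> 1" and \<xi>: "\<And>j. norm (\<xi> j) \<le> 1"
    and lim: "\<And>j. (\<lambda>k. x k j) \<longlonglongrightarrow> \<xi> j"
    and nz: "\<And>k s. Re s > \<sigma> \<Longrightarrow> bohr_transform a (\<lambda>j. x k j * of_nat (nth_prime j) powr (-s)) \<noteq> 0"
    and s: "Re s > \<sigma>"
  shows "bohr_transform a (\<lambda>j. \<xi> j * of_nat (nth_prime j) powr (-s)) \<noteq> 0"
proof
  define S where "S = {s. Re s > \<sigma>}"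
  define \<phi> where "\<phi> s = (\<lambda>j. of_nat (nth_prime j) powr (-s) :: complex)" for s
  define c where "c = (\<lambda>n. a n * bohr_monomial \<xi> n)"
  have c_le: "norm (c n) \<le> norm (a n)" for n
    unfolding c_def norm_mult using norm_bohr_monomial_le_1[OF \<xi>] by (simp add: mult_left_le)
  assume "bohr_transform a (\<lambda>j. \<xi> j * of_nat (nth_prime j) powr (-s)) = 0"
  then have zero: "bohr_transform c (\<phi> s) = 0"
    by (simp add: bohr_transform_prime_scaled_eq_monomial_coeffs c_def \<phi>_def)
  have const: "(\<lambda>s. bohr_transform c (\<phi> s)) constant_on S"
  proof (rule bohr_transform_hurwitz[OF a _ c_le, where s\<^sub>0 = s])
    show "norm (a n * bohr_monomial (x k) n) \<le> norm (a n)" if "n > 0" for k n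
      unfolding norm_mult using norm_bohr_monomial_le_1[OF x] by (simp add: mult_left_le)
    show "(\<lambda>k. a n * bohr_monomial (x k) n) \<longlonglongrightarrow> c n" if "n > 0" for n
      unfolding c_def by (intro tendsto_intros lim)
    show "open S" "connected S"
      by (simp_all add: S_def open_halfspace_Re_gt convex_connected convex_halfspace_Re_gt)
    show "\<phi> s \<in> prime_polydisc \<sigma>" if "s \<in> S" for s
      using prime_powr_in_prime_polydisc prime_polydisc_antimono[of \<sigma> "Re s"] that
      by (auto simp: S_def \<phi>_def)
    show "(\<lambda>s. \<phi> s j) holomorphic_on S" for j
      unfolding \<phi>_def by (intro holomorphic_intros)
    show "bohr_transform (\<lambda>n. a n * bohr_monomial (x k) n) (\<phi> s) \<noteq> 0" if "s \<in> S" for k s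
      using nz[of s k] that by (simp add: bohr_transform_prime_scaled_eq_monomial_coeffs \<phi>_def S_def)
    show "s \<in> S" using s by (simp add: S_def)
  qed (rule zero)
  have "dirichlet_abs_summable c \<sigma>"
    using c_le by (intro dirichlet_abs_summable_dominated[OF a, of c 1]) simp
  moreover have "c 1 \<noteq> 0" using a1 by (simp add: c_def)
  ultimately obtain \<tau> where "\<tau> > \<sigma>" "bohr_transform c (\<phi> (of_real \<tau>)) \<noteq> 0"
    unfolding \<phi>_def by (rule bohr_transform_prime_powr_nonzero_far)
  moreover have "s \<in> S" "of_real \<tau> \<in> S" using s \<open>\<tau> > \<sigma>\<close> by (auto simp: S_def)
  ultimately show False
    using const zero unfolding constant_on_def by force
qed

lemma bohr_transform_fun_upd_zero_on_disc:
  assumes a: "dirichlet_abs_summable a \<sigma>"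
    and maximal: "\<And>\<tau> z. \<tau> > \<sigma> \<Longrightarrow> z \<in> prime_polydisc \<tau> \<Longrightarrow> bohr_transform a z \<noteq> 0"
    and \<zeta>: "\<zeta> \<in> prime_polydisc \<sigma>" "bohr_transform a \<zeta> = 0"
    and inner: "norm (\<zeta> j) < real (nth_prime j) powr (-\<sigma>)"
    and v: "norm v < real (nth_prime j) powr (-\<sigma>)"
  shows "bohr_transform a (\<zeta>(j := v)) = 0"
proof -
  define R where "R = real (nth_prime j) powr (-\<sigma>)"
  define \<epsilon> where "\<epsilon> k = inverse (real (Suc k))" for k
  define b where "b = (\<lambda>k n. a n * of_nat n powr (- of_real (\<epsilon> k)))"
  have upd: "\<zeta>(j := v) \<in> prime_polydisc \<sigma>" if "v \<in> ball 0 R" for v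
    using fun_upd_in_prime_polydisc[OF \<zeta>(1)] that by (simp add: R_def)
  have "(\<lambda>v. bohr_transform a (\<zeta>(j := v))) constant_on ball 0 R"
  proof (rule bohr_transform_hurwitz[OF a, where b = b and s\<^sub>0 = "\<zeta> j"])
    show "norm (b k n) \<le> norm (a n)" if "n > 0" for k n
      using norm_of_nat_powr_le_1[of "\<epsilon> k" n]
      by (simp add: b_def \<epsilon>_def norm_mult mult_left_le del: of_real_inverse)
    show "(\<lambda>k. b k n) \<longlonglongrightarrow> a n" if "n > 0" for n
      using tendsto_mult_left[OF tendsto_of_nat_powr_one[OF that LIMSEQ_inverse_real_of_nat], of "a n"]
      by (simp add: b_def \<epsilon>_def)
    show "(\<lambda>v. (\<zeta>(j := v)) i) holomorphic_on ball 0 R" for i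
      by (cases "i = j") simp_all
    show "bohr_transform (b k) (\<zeta>(j := v)) \<noteq> 0" if "v \<in> ball 0 R" for k v
    proof -
      have "(\<lambda>i. (\<zeta>(j := v)) i * of_nat (nth_prime i) powr (- of_real (\<epsilon> k)))
              \<in> prime_polydisc (\<sigma> + \<epsilon> k)"
        using prime_scaled_in_prime_polydisc[OF upd[OF that], of "of_real (\<epsilon> k)"] by simp
      moreover have "\<epsilon> k > 0" by (simp add: \<epsilon>_def)
      ultimately have "bohr_transform a (\<lambda>i. (\<zeta>(j := v)) i * of_nat (nth_prime i) powr (- of_real (\<epsilon> k))) \<noteq> 0"
        using maximal[of "\<sigma> + \<epsilon> k"] by simp
      then show ?thesis
        by (simp only: b_def bohr_transform_prime_scaled_eq_powr_coeffs not_False_eq_True)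
    qed
  qed (use upd inner \<zeta>(2) in \<open>simp_all add: R_def\<close>)
  moreover have "\<zeta> j \<in> ball 0 R" "v \<in> ball 0 R" using inner v by (simp_all add: R_def)
  ultimately show ?thesis
    using \<zeta>(2) unfolding constant_on_def by force
qed

lemma bohr_transform_fun_upd_zero_on_closed_disc:
  assumes a: "dirichlet_abs_summable a \<sigma>" and \<zeta>: "\<zeta> \<in> prime_polydisc \<sigma>"
    and zero: "\<And>v. norm v < real (nth_prime j) powr (-\<sigma>) \<Longrightarrow> bohr_transform a (\<zeta>(j := v)) = 0"
    and w: "norm w \<le> real (nth_prime j) powr (-\<sigma>)"
  shows "bohr_transform a (\<zeta>(j := w)) = 0"
proof -
  define R where "R = real (nth_prime j) powr (-\<sigma>)"
  have ev01: "\<forall>\<^sub>F t in at_left (1 :: real). t \<in> {0<..<1}"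
    by (rule eventually_at_left_real) simp
  have "((\<lambda>t. bohr_transform a (\<zeta>(j := of_real t * w))) \<longlongrightarrow> bohr_transform a (\<zeta>(j := w))) (at_left 1)"
  proof (rule tendsto_bohr_transform[OF a])
    show "\<forall>\<^sub>F t in at_left 1. \<zeta>(j := of_real t * w) \<in> prime_polydisc \<sigma>"
      using ev01
    proof eventually_elim
      case (elim t)
      then have "norm (of_real t * w) \<le> R"
        using w mult_left_le_one_le[of "norm w" t] by (auto simp: R_def norm_mult)
      then show ?case by (intro fun_upd_in_prime_polydisc[OF \<zeta>]) (simp add: R_def)
    qed
    show "((\<lambda>t. (\<zeta>(j := of_real t * w)) i) \<longlongrightarrow> (\<zeta>(j := w)) i) (at_left 1)" for i
      using tendsto_mult_right[OF tendsto_of_real[OF tendsto_ident_at], of w "1 :: real"]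
      by (cases "i = j") simp_all
  qed simp
  moreover have "\<forall>\<^sub>F t in at_left 1. bohr_transform a (\<zeta>(j := of_real t * w)) = 0"
    using ev01
  proof eventually_elim
    case (elim t)
    have "norm (of_real t * w) = t * norm w"
      using elim by (simp add: norm_mult)
    also have "\<dots> \<le> t * R"
      using elim w by (intro mult_left_mono) (auto simp: R_def)
    also have "\<dots> < R"
      using elim mult_strict_right_mono[of t 1 R] by (simp add: R_def)
    finally show ?case by (intro zero) (simp add: R_def)
  qed
  then have "((\<lambda>t. bohr_transform a (\<zeta>(j := of_real t * w))) \<longlongrightarrow> 0) (at_left 1)"
    by (rule tendsto_eventually)
  ultimately show ?thesis
    by (rule tendsto_unique[OF trivial_limit_at_left_real])
qed

lemma bohr_transform_zero_change_finitely_many_inner_coordinates: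
  assumes a: "dirichlet_abs_summable a \<sigma>"
    and maximal: "\<And>\<tau> z. \<tau> > \<sigma> \<Longrightarrow> z \<in> prime_polydisc \<tau> \<Longrightarrow> bohr_transform a z \<noteq> 0"
    and \<zeta>: "\<zeta> \<in> prime_polydisc \<sigma>" "bohr_transform a \<zeta> = 0"
    and \<xi>: "\<xi> \<in> prime_polydisc \<sigma>"
    and inner: "\<And>i. \<xi> i \<noteq> \<zeta> i \<Longrightarrow> norm (\<zeta> i) < real (nth_prime i) powr (-\<sigma>)"
  defines "Z N \<equiv> (\<lambda>i. if i < N then \<xi> i else \<zeta> i)"
  shows "Z N \<in> prime_polydisc \<sigma> \<and> bohr_transform a (Z N) = 0"
proof (induction N)
  case 0
  then show ?case using \<zeta> by (simp add: Z_def)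
next
  case (Suc N)
  have upd: "Z (Suc N) = (Z N)(N := \<xi> N)"
    by (auto simp: Z_def fun_eq_iff)
  have \<xi>N: "norm (\<xi> N) \<le> real (nth_prime N) powr (-\<sigma>)"
    using \<xi> by (simp add: prime_polydisc_def)
  have "bohr_transform a ((Z N)(N := \<xi> N)) = 0"
  proof (cases "\<xi> N = \<zeta> N")
    case True
    then have "(Z N)(N := \<xi> N) = Z N" by (auto simp: Z_def fun_eq_iff)
    with Suc.IH show ?thesis by simp
  next
    case False
    then have "norm (Z N N) < real (nth_prime N) powr (-\<sigma>)"
      using inner by (simp add: Z_def)
    with Suc.IH show ?thesis
      by (intro bohr_transform_fun_upd_zero_on_closed_disc[OF a _ _ \<xi>N]
          bohr_transform_fun_upd_zero_on_disc[OF a maximal]) auto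
  qed
  with Suc.IH fun_upd_in_prime_polydisc[OF _ \<xi>N, of "Z N"] show ?case
    unfolding upd by blast
qed

lemma bohr_transform_zero_change_inner_coordinates:
  assumes a: "dirichlet_abs_summable a \<sigma>"
    and maximal: "\<And>\<tau> z. \<tau> > \<sigma> \<Longrightarrow> z \<in> prime_polydisc \<tau> \<Longrightarrow> bohr_transform a z \<noteq> 0"
    and \<zeta>: "\<zeta> \<in> prime_polydisc \<sigma>" "bohr_transform a \<zeta> = 0"
    and \<xi>: "\<xi> \<in> prime_polydisc \<sigma>"
    and inner: "\<And>i. \<xi> i \<noteq> \<zeta> i \<Longrightarrow> norm (\<zeta> i) < real (nth_prime i) powr (-\<sigma>)"
  shows "bohr_transform a \<xi> = 0"
proof -
  define Z where "Z N = (\<lambda>i. if i < N then \<xi> i else \<zeta> i)" for N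
  have Z: "Z N \<in> prime_polydisc \<sigma> \<and> bohr_transform a (Z N) = 0" for N
    unfolding Z_def by (rule bohr_transform_zero_change_finitely_many_inner_coordinates[OF a maximal \<zeta> \<xi> inner])
  have "(\<lambda>N. bohr_transform a (Z N)) \<longlonglongrightarrow> bohr_transform a \<xi>"
  proof (rule tendsto_bohr_transform[OF a])
    show "(\<lambda>N. Z N i) \<longlonglongrightarrow> \<xi> i" for i
    proof (rule tendsto_eventually)
      show "\<forall>\<^sub>F N in sequentially. Z N i = \<xi> i"
        using eventually_gt_at_top[of i] by (rule eventually_mono) (simp add: Z_def)
    qed
  qed (use Z in simp_all)
  moreover have "(\<lambda>N. bohr_transform a (Z N)) \<longlonglongrightarrow> 0"
    using Z by simp
  ultimately show ?thesis
    by (rule LIMSEQ_unique)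
qed

lemma bohr_transform_zero_on_distinguished_boundary:
  assumes a: "dirichlet_abs_summable a \<sigma>"
    and maximal: "\<And>\<tau> z. \<tau> > \<sigma> \<Longrightarrow> z \<in> prime_polydisc \<tau> \<Longrightarrow> bohr_transform a z \<noteq> 0"
    and \<zeta>: "\<zeta> \<in> prime_polydisc \<sigma>" "bohr_transform a \<zeta> = 0"
  obtains u where "\<And>j. norm (u j) = 1"
    and "bohr_transform a (\<lambda>j. u j * of_nat (nth_prime j) powr (- of_real \<sigma>)) = 0"
proof -
  define R where "R j = real (nth_prime j) powr (-\<sigma>)" for j
  define u where "u j = (if norm (\<zeta> j) < R j then 1 else \<zeta> j / of_real (R j))" for j
  have R: "of_nat (nth_prime j) powr (- of_real \<sigma>) = complex_of_real (R j)" for j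
    unfolding R_def by (subst powr_of_real[symmetric]) auto
  have "R j > 0" for j by (simp add: R_def)
  have norm_u: "norm (u j) = 1" for j
    using \<zeta>(1) \<open>R j > 0\<close> by (auto simp: u_def R_def prime_polydisc_def norm_divide not_less intro!: antisym)
  have "bohr_transform a (\<lambda>j. u j * of_real (R j)) = 0"
  proof (rule bohr_transform_zero_change_inner_coordinates[OF a maximal \<zeta>])
    show "(\<lambda>j. u j * of_real (R j)) \<in> prime_polydisc \<sigma>"
      using norm_u \<open>\<And>j. R j > 0\<close> by (simp add: prime_polydisc_def norm_mult R_def)
    show "norm (\<zeta> i) < real (nth_prime i) powr (-\<sigma>)" if "u i * of_real (R i) \<noteq> \<zeta> i" for i
      using that \<open>R i > 0\<close> by (auto simp: u_def R_def split: if_splits)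
  qed
  with norm_u show ?thesis
    by (intro that[of u]) (simp_all add: R)
qed

lemma zero_in_prime_polydisc_limit:
  assumes a: "dirichlet_abs_summable a \<sigma>\<^sub>0"
    and \<sigma>: "\<And>k. \<sigma> k \<ge> \<sigma>\<^sub>0" "\<sigma> \<longlonglongrightarrow> \<tau>"
    and z: "\<And>k. z k \<in> prime_polydisc (\<sigma> k)" "\<And>k. bohr_transform a (z k) = 0"
  shows "\<exists>\<zeta>\<in>prime_polydisc \<tau>. bohr_transform a \<zeta> = 0"
proof -
  have "z k \<in> prime_polydisc \<sigma>\<^sub>0" for k
    using prime_polydisc_antimono[OF \<sigma>(1)] z(1) by blast
  then obtain l r where "l \<in> prime_polydisc \<sigma>\<^sub>0" and r: "strict_mono r" and zr: "(z \<circ> r) \<longlonglongrightarrow> l"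
    using compact_imp_seq_compact[OF compact_prime_polydisc] unfolding seq_compact_def by metis
  have lim: "(\<lambda>k. z (r k) j) \<longlonglongrightarrow> l j" for j
  proof -
    have "isCont (\<lambda>x :: nat \<Rightarrow> complex. x j) l"
      using continuous_on_product_coordinates[of j] continuous_on_eq_continuous_at[OF open_UNIV] by blast
    from isCont_tendsto_compose[OF this zr] show ?thesis by (simp add: o_def)
  qed
  have "l \<in> prime_polydisc \<tau>"
    unfolding prime_polydisc_def
  proof safe
    fix j
    have "(\<lambda>k. \<sigma> (r k)) \<longlonglongrightarrow> \<tau>"
      using LIMSEQ_subseq_LIMSEQ[OF \<sigma>(2) r] by (simp add: o_def)
    then have "(\<lambda>k. real (nth_prime j) powr (- \<sigma> (r k))) \<longlonglongrightarrow> real (nth_prime j) powr (- \<tau>)"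
      by (intro tendsto_intros) simp_all
    moreover have "norm (z (r k) j) \<le> real (nth_prime j) powr (- \<sigma> (r k))" for k
      using z(1)[of "r k"] by (simp add: prime_polydisc_def)
    ultimately show "norm (l j) \<le> real (nth_prime j) powr (- \<tau>)"
      by (intro tendsto_le[OF trivial_limit_sequentially _ tendsto_norm[OF lim]]) auto
  qed
  moreover have "(\<lambda>k. bohr_transform a (z (r k))) \<longlonglongrightarrow> bohr_transform a l"
    using \<open>\<And>k. z k \<in> prime_polydisc \<sigma>\<^sub>0\<close> by (intro tendsto_bohr_transform[OF a _ lim]) simp_all
  then have "bohr_transform a l = 0"
    using z(2) by (simp add: LIMSEQ_const_iff)
  ultimately show ?thesis by blast
qed

lemma closed_zero_abscissas:
  assumes a: "dirichlet_abs_summable a \<sigma>\<^sub>0"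
  shows "closed {\<sigma>. \<sigma> \<ge> \<sigma>\<^sub>0 \<and> (\<exists>\<zeta>\<in>prime_polydisc \<sigma>. bohr_transform a \<zeta> = 0)}"
  unfolding closed_sequential_limits
proof safe
  fix \<sigma> \<tau>
  assume \<sigma>: "\<forall>k. \<sigma> k \<in> {\<sigma>. \<sigma> \<ge> \<sigma>\<^sub>0 \<and> (\<exists>\<zeta>\<in>prime_polydisc \<sigma>. bohr_transform a \<zeta> = 0)}"
    and lim: "\<sigma> \<longlonglongrightarrow> \<tau>"
  then obtain z where z: "\<And>k. z k \<in> prime_polydisc (\<sigma> k)" "\<And>k. bohr_transform a (z k) = 0"
    using choice[of "\<lambda>k \<zeta>. \<zeta> \<in> prime_polydisc (\<sigma> k) \<and> bohr_transform a \<zeta> = 0"] by auto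
  have \<sigma>\<^sub>0: "\<And>k. \<sigma> k \<ge> \<sigma>\<^sub>0" using \<sigma> by simp
  then show "\<tau> \<ge> \<sigma>\<^sub>0" by (intro LIMSEQ_le_const[OF lim]) blast
  show "\<exists>\<zeta>\<in>prime_polydisc \<tau>. bohr_transform a \<zeta> = 0"
    by (rule zero_in_prime_polydisc_limit[OF a \<sigma>\<^sub>0 lim z])
qed

lemma bohr_transform_maximal_zero:
  assumes a: "dirichlet_abs_summable a \<sigma>\<^sub>0" and a1: "a 1 \<noteq> 0"
    and z\<^sub>0: "z\<^sub>0 \<in> prime_polydisc \<sigma>\<^sub>0" "bohr_transform a z\<^sub>0 = 0"
  obtains \<sigma> \<zeta> where "\<sigma> \<ge> \<sigma>\<^sub>0" "\<zeta> \<in> prime_polydisc \<sigma>" "bohr_transform a \<zeta> = 0"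
    and "\<And>\<tau> z. \<tau> > \<sigma> \<Longrightarrow> z \<in> prime_polydisc \<tau> \<Longrightarrow> bohr_transform a z \<noteq> 0"
proof -
  define Z where "Z = {\<sigma>. \<sigma> \<ge> \<sigma>\<^sub>0 \<and> (\<exists>\<zeta>\<in>prime_polydisc \<sigma>. bohr_transform a \<zeta> = 0)}"
  obtain \<sigma>\<^sub>1 where far: "\<And>\<tau> z. \<tau> \<ge> \<sigma>\<^sub>1 \<Longrightarrow> z \<in> prime_polydisc \<tau> \<Longrightarrow> bohr_transform a z \<noteq> 0"
    using bohr_transform_nonzero_far[OF a a1] by blast
  have bdd: "bdd_above Z"
  proof (rule bdd_aboveI)
    fix \<sigma> assume "\<sigma> \<in> Z"
    then obtain \<zeta> where "\<zeta> \<in> prime_polydisc \<sigma>" "bohr_transform a \<zeta> = 0" by (auto simp: Z_def)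
    then show "\<sigma> \<le> \<sigma>\<^sub>1" using far[of \<sigma> \<zeta>] by linarith
  qed
  have "\<sigma>\<^sub>0 \<in> Z" using z\<^sub>0 by (auto simp: Z_def)
  then have "Sup Z \<in> Z"
    using closed_contains_Sup[OF _ bdd] closed_zero_abscissas[OF a] unfolding Z_def by blast
  moreover have "bohr_transform a z \<noteq> 0" if "\<tau> > Sup Z" "z \<in> prime_polydisc \<tau>" for \<tau> z
  proof
    assume "bohr_transform a z = 0"
    with that \<open>Sup Z \<in> Z\<close> have "\<tau> \<in> Z" by (auto simp: Z_def)
    with that(1) show False using cSup_upper[OF _ bdd] by force
  qed
  ultimately show ?thesis
    using that[of "Sup Z"] unfolding Z_def by blast
qed

section \<open>Kronecker approximation by imaginary prime powers\<close>

lemma multiplicity_nth_prime_prod: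
  assumes "finite J"
  shows "multiplicity (nth_prime i) (\<Prod>j\<in>J. nth_prime j ^ e j) = (if i \<in> J then e i else 0)"
proof -
  have "multiplicity (nth_prime i) (\<Prod>j\<in>J. nth_prime j ^ e j) =
        (\<Sum>j\<in>J. multiplicity (nth_prime i) (nth_prime j ^ e j))"
    using assms by (intro prime_elem_multiplicity_prod_distrib) auto
  also have "\<dots> = (\<Sum>j\<in>J. if j = i then e i else 0)"
    by (intro sum.cong refl)
      (auto simp: prime_elem_multiplicity_power_distrib multiplicity_self prime_multiplicity_other)
  also have "\<dots> = (if i \<in> J then e i else 0)"
    using assms by (simp add: sum.delta')
  finally show ?thesis .
qed

lemma ln_nth_primes_int_combination_eq_0:
  assumes J: "finite J" and sum0: "(\<Sum>j\<in>J. of_int (c j) * ln (real (nth_prime j))) = 0" and "i \<in> J"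
  shows "c i = 0"
proof -
  define A where "A = (\<Prod>j\<in>J. nth_prime j ^ nat (c j))"
  define B where "B = (\<Prod>j\<in>J. nth_prime j ^ nat (- c j))"
  have "real_of_int (c j) = real (nat (c j)) - real (nat (- c j))" for j
    by (cases "c j \<ge> 0") auto
  then have "ln (real A) = ln (real B)"
    using J sum0
    by (simp add: A_def B_def ln_prod ln_realpow left_diff_distrib sum_subtractf prod_pos)
  then have "real A = real B"
    by (subst (asm) ln_inj_iff) (auto simp: A_def B_def prod_pos)
  then have "A = B" by (simp only: of_nat_eq_iff)
  have "nat (c i) = multiplicity (nth_prime i) A"
    using multiplicity_nth_prime_prod[OF J, of i "\<lambda>j. nat (c j)"] \<open>i \<in> J\<close> by (simp add: A_def)
  also have "\<dots> = nat (- c i)"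
    using multiplicity_nth_prime_prod[OF J, of i "\<lambda>j. nat (- c j)"] \<open>i \<in> J\<close> \<open>A = B\<close> by (simp add: B_def)
  finally show ?thesis by simp
qed

lemma independent_ln_nth_primes:
  "module.independent (\<lambda>r. (*) (real_of_int r)) ((\<lambda>j. ln (real (nth_prime j))) ` {..<n})"
proof
  define \<theta> where "\<theta> j = ln (real (nth_prime j))" for j
  have int_module: "module (\<lambda>r. (*) (real_of_int r))"
    by (simp add: module.intro distrib_left mult.commute)
  have inj\<theta>: "inj \<theta>"
    by (rule injI) (simp add: \<theta>_def)
  assume "module.dependent (\<lambda>r. (*) (real_of_int r)) (\<theta> ` {..<n})"
  then obtain t u where t: "finite t" "t \<subseteq> \<theta> ` {..<n}" "(\<Sum>v\<in>t. of_int (u v) * v) = 0"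
      and "\<exists>v\<in>t. u v \<noteq> 0"
    unfolding module.dependent_explicit[OF int_module] by blast
  obtain J where J: "J \<subseteq> {..<n}" "t = \<theta> ` J"
    using t(2) subset_image_iff by metis
  then have "finite J" using finite_subset by blast
  from \<open>\<exists>v\<in>t. u v \<noteq> 0\<close> obtain i where "i \<in> J" "u (\<theta> i) \<noteq> 0"
    using J(2) by blast
  moreover have "(\<Sum>j\<in>J. of_int (u (\<theta> j)) * ln (real (nth_prime j))) = 0"
    using t(3) unfolding J(2) sum.reindex[OF inj_on_subset[OF inj\<theta> subset_UNIV]] by (simp add: \<theta>_def)
  ultimately show False
    using ln_nth_primes_int_combination_eq_0[OF \<open>finite J\<close>, of "\<lambda>j. u (\<theta> j)"] by blast
qed

lemma nth_prime_imag_powr_approx: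
  assumes u: "\<And>j. norm (u j) = 1" and "\<epsilon> > 0"
  obtains T :: real where
    "\<And>j. j < n \<Longrightarrow> norm (of_nat (nth_prime j) powr (- (\<i> * of_real T)) - u j) < \<epsilon>"
proof -
  define \<theta> where "\<theta> j = ln (real (nth_prime j))" for j
  \<comment> \<open>If t ln p_j is close to \<alpha> j modulo 1, then p_j^(-2\<pi> i t) is close to u j.\<close>
  define \<alpha> where "\<alpha> j = - Arg (u j) / (2 * pi)" for j
  have "isCont (\<lambda>e::real. exp (- 2 * pi * \<i> * of_real e)) 0"
    by (intro continuous_intros)
  then obtain \<delta> where "\<delta> > 0" and \<delta>: "\<And>e. \<bar>e\<bar> < \<delta> \<Longrightarrow> norm (exp (- 2 * pi * \<i> * of_real e) - 1) < \<epsilon>"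
    using \<open>\<epsilon> > 0\<close> unfolding continuous_at_eps_delta by (force simp: dist_norm)
  have "inj_on \<theta> {..<n}"
    by (rule inj_onI) (simp add: \<theta>_def)
  then obtain t h where th: "\<And>j. j < n \<Longrightarrow> \<bar>t * \<theta> j - of_int (h j) - \<alpha> j\<bar> < \<delta>"
    using Kronecker_thm_1[of \<theta> n \<delta> \<alpha>] independent_ln_nth_primes[of n] \<open>\<delta> > 0\<close>
    unfolding \<theta>_def by blast
  show ?thesis
  proof (rule that[of "2 * pi * t"])
    fix j assume "j < n"
    define e where "e = t * \<theta> j - of_int (h j) - \<alpha> j"
    have "u j \<noteq> 0" using u[of j] by auto
    then have u_exp: "exp (\<i> * of_real (Arg (u j))) = u j"
      using cis_Arg[of "u j"] u[of j] by (simp add: cis_conv_exp sgn_div_norm)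
    have "- (\<i> * of_real (2 * pi * t)) * of_real (\<theta> j) =
          - 2 * pi * \<i> * of_real e + 2 * of_int (- h j) * pi * \<i> + \<i> * of_real (Arg (u j))"
      by (simp add: e_def \<alpha>_def algebra_simps)
    then have "of_nat (nth_prime j) powr (- (\<i> * of_real (2 * pi * t))) =
               exp (- 2 * pi * \<i> * of_real e) * exp (2 * of_int (- h j) * pi * \<i>) *
               exp (\<i> * of_real (Arg (u j)))"
      by (simp add: powr_def \<theta>_def Ln_of_nat exp_add[symmetric])
    also have "exp (2 * of_int (- h j) * pi * \<i>) = 1"
      by (rule exp_integer_2pi) simp
    finally have "of_nat (nth_prime j) powr (- (\<i> * of_real (2 * pi * t))) - u j =
                  u j * (exp (- 2 * pi * \<i> * of_real e) - 1)"
      by (simp add: u_exp algebra_simps)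
    then show "norm (of_nat (nth_prime j) powr (- (\<i> * of_real (2 * pi * t))) - u j) < \<epsilon>"
      using \<delta>[of e] th[OF \<open>j < n\<close>] by (simp add: e_def norm_mult u)
  qed
qed

lemma nth_prime_imag_powr_tendsto:
  assumes u: "\<And>j. norm (u j) = 1"
  obtains T :: "nat \<Rightarrow> real"
  where "\<And>j. (\<lambda>k. of_nat (nth_prime j) powr (- (\<i> * of_real (T k)))) \<longlonglongrightarrow> u j"
proof -
  have "\<exists>T::real. \<forall>j<k. norm (of_nat (nth_prime j) powr (- (\<i> * of_real T)) - u j) < inverse (real (Suc k))"
    for k
  proof -
    obtain T :: real
      where "\<And>j. j < k \<Longrightarrow> norm (of_nat (nth_prime j) powr (- (\<i> * of_real T)) - u j) < inverse (real (Suc k))"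
      using nth_prime_imag_powr_approx[where u = u and n = k and \<epsilon> = "inverse (real (Suc k))"] u
      by force
    then show ?thesis by blast
  qed
  then obtain T :: "nat \<Rightarrow> real" where T: "\<forall>k. \<forall>j<k.
      norm (of_nat (nth_prime j) powr (- (\<i> * of_real (T k))) - u j) < inverse (real (Suc k))"
    using choice[of "\<lambda>k T. \<forall>j<k. norm (of_nat (nth_prime j) powr (- (\<i> * of_real T)) - u j)
                     < inverse (real (Suc k))"] by blast
  show ?thesis
  proof (rule that, rule LIM_zero_cancel, rule Lim_null_comparison)
    show "\<forall>\<^sub>F k in sequentially. norm (of_nat (nth_prime j) powr (- (\<i> * of_real (T k))) - u j)
            \<le> inverse (real (Suc k))" for j
      using eventually_gt_at_top[of j] by (rule eventually_mono) (use T in \<open>auto intro: less_imp_le\<close>)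
  qed (rule LIMSEQ_inverse_real_of_nat)
qed

section \<open>Zeros of the Bohr transform and of the Dirichlet series\<close>

lemma bohr_transform_nonzero_on_torus:
  assumes summ: "\<And>\<sigma>. \<sigma> > 0 \<Longrightarrow> dirichlet_abs_summable a \<sigma>" and a1: "a 1 \<noteq> 0"
    and D: "\<And>s. Re s > 0 \<Longrightarrow> dirichlet_series a s \<noteq> 0"
    and u: "\<And>j. norm (u j) = 1" and "\<sigma> > 0"
  shows "bohr_transform a (\<lambda>j. u j * of_nat (nth_prime j) powr (- of_real \<sigma>)) \<noteq> 0"
proof -
  obtain T where T: "\<And>j. (\<lambda>k. of_nat (nth_prime j) powr (- (\<i> * of_real (T k)))) \<longlonglongrightarrow> u j"
    using nth_prime_imag_powr_tendsto[where u = u, OF u] by blast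
  show ?thesis
  proof (rule bohr_transform_prime_scaled_limit_nonzero[OF summ[of "\<sigma> / 2"] a1 _ _ T])
    show "norm (of_nat (nth_prime j) powr (- (\<i> * of_real (T k))) :: complex) \<le> 1" for k j
      by (simp add: norm_of_nat_powr)
    show "bohr_transform a (\<lambda>j. of_nat (nth_prime j) powr (- (\<i> * of_real (T k))) *
            of_nat (nth_prime j) powr (-s)) \<noteq> 0"
      if "Re s > \<sigma> / 2" for k s
    proof -
      have "of_nat p powr (- (\<i> * of_real (T k))) * of_nat p powr (-s) =
            1 * of_nat p powr (- (s + \<i> * of_real (T k)))" for p :: nat
        by (subst powr_add[symmetric]) (simp add: algebra_simps)
      moreover have "dirichlet_series a (s + \<i> * of_real (T k)) \<noteq> 0"
        using D that \<open>\<sigma> > 0\<close> by simp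
      ultimately show ?thesis
        using dirichlet_series_eq_bohr_transform[of a "\<lambda>_. 1" "s + \<i> * of_real (T k)"]
        by (simp only: bohr_monomial_one mult_1_right not_False_eq_True)
    qed
  qed (use u \<open>\<sigma> > 0\<close> in simp_all)
qed

lemma bohr_transform_nonzero_in_prime_polydisc:
  assumes summ: "\<And>\<sigma>. \<sigma> > 0 \<Longrightarrow> dirichlet_abs_summable a \<sigma>" and a1: "a 1 \<noteq> 0"
    and D: "\<And>s. Re s > 0 \<Longrightarrow> dirichlet_series a s \<noteq> 0"
    and "\<sigma> > 0" "z \<in> prime_polydisc \<sigma>"
  shows "bohr_transform a z \<noteq> 0"
proof
  assume "bohr_transform a z = 0"
  with bohr_transform_maximal_zero[OF summ[OF \<open>\<sigma> > 0\<close>] a1 \<open>z \<in> prime_polydisc \<sigma>\<close>]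
  obtain \<sigma>' \<zeta> where "\<sigma>' \<ge> \<sigma>" "\<zeta> \<in> prime_polydisc \<sigma>'" "bohr_transform a \<zeta> = 0"
    and maximal: "\<And>\<tau> z. \<tau> > \<sigma>' \<Longrightarrow> z \<in> prime_polydisc \<tau> \<Longrightarrow> bohr_transform a z \<noteq> 0"
    by blast
  have "\<sigma>' > 0" using \<open>\<sigma>' \<ge> \<sigma>\<close> \<open>\<sigma> > 0\<close> by linarith
  obtain u where u: "\<And>j. norm (u j) = 1"
    and "bohr_transform a (\<lambda>j. u j * of_nat (nth_prime j) powr (- of_real \<sigma>')) = 0"
  proof (rule bohr_transform_zero_on_distinguished_boundary[where a = a and \<sigma> = \<sigma>' and \<zeta> = \<zeta>])
    show "bohr_transform a z \<noteq> 0" if "\<tau> > \<sigma>'" "z \<in> prime_polydisc \<tau>" for \<tau> z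
      using maximal that by blast
  qed (use summ \<open>\<sigma>' > 0\<close> \<open>\<zeta> \<in> prime_polydisc \<sigma>'\<close> \<open>bohr_transform a \<zeta> = 0\<close> that in blast)+
  with bohr_transform_nonzero_on_torus[OF summ a1 D _ \<open>\<sigma>' > 0\<close>, of u] u show False
    by simp
qed

lemma dirichlet_series_nonzero_if_bohr_transform_nonzero:
  assumes summ: "\<And>\<sigma>. \<sigma> > 0 \<Longrightarrow> dirichlet_abs_summable a \<sigma>" and a1: "a 1 \<noteq> 0"
    and nz: "\<And>z. z \<in> D0_infty \<Longrightarrow> bohr_transform a z \<noteq> 0" and "Re s > 0"
  shows "dirichlet_series a s \<noteq> 0"
proof -
  define x where "x k j = (if j < k then 1 else 0 :: complex)" for k j :: nat
  have "bohr_transform a (\<lambda>j. 1 * of_nat (nth_prime j) powr (-s)) \<noteq> 0"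
  proof (rule bohr_transform_prime_scaled_limit_nonzero[OF summ[of "Re s / 2"] a1, where x = x])
    show "(\<lambda>k. x k j) \<longlonglongrightarrow> 1" for j
      using eventually_gt_at_top[of j] by (intro tendsto_eventually) (auto simp: x_def elim: eventually_mono)
    show "bohr_transform a (\<lambda>j. x k j * of_nat (nth_prime j) powr (-s')) \<noteq> 0"
      if "Re s' > Re s / 2" for k s'
    proof (rule nz)
      have "real (nth_prime j) powr (- Re s') < 1" for j
        using that \<open>Re s > 0\<close> nth_prime_gt_1[of j] by (intro powr_less_one) auto
      moreover have "finite {j. x k j * of_nat (nth_prime j) powr (-s') \<noteq> 0}"
        by (rule finite_subset[of _ "{..<k}"]) (auto simp: x_def)
      ultimately show "(\<lambda>j. x k j * of_nat (nth_prime j) powr (-s')) \<in> D0_infty"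
        by (simp add: D0_infty_def x_def norm_mult norm_of_nat_powr)
    qed
  qed (use \<open>Re s > 0\<close> in \<open>simp_all add: x_def\<close>)
  then show ?thesis
    using dirichlet_series_eq_bohr_transform[of a "\<lambda>_. 1" s] by simp
qed

lemma dirichlet_series_completely_multiplicative_twist_nonzero:
  assumes summ: "\<And>\<sigma>. \<sigma> > 0 \<Longrightarrow> dirichlet_abs_summable a \<sigma>" and a1: "a 1 \<noteq> 0"
    and D: "\<And>s. Re s > 0 \<Longrightarrow> dirichlet_series a s \<noteq> 0"
    and \<rho>: "completely_multiplicative \<rho>" "\<And>n. n \<ge> 1 \<Longrightarrow> norm (\<rho> n) \<le> 1"
    and "Re s > 0"
  shows "dirichlet_series (\<lambda>n. a n * \<rho> n) s \<noteq> 0"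
proof -
  define x where "x j = \<rho> (nth_prime j)" for j
  have "dirichlet_series (\<lambda>n. a n * \<rho> n) s = dirichlet_series (\<lambda>n. a n * bohr_monomial x n) s"
    unfolding dirichlet_series_def x_def
    by (simp add: bohr_monomial_completely_multiplicative[OF \<rho>(1)] del: of_nat_Suc)
  also have "\<dots> = bohr_transform a (\<lambda>j. x j * of_nat (nth_prime j) powr (-s))"
    by (rule dirichlet_series_eq_bohr_transform)
  also have "\<dots> \<noteq> 0"
  proof (rule bohr_transform_nonzero_in_prime_polydisc[OF summ a1 D \<open>Re s > 0\<close>])
    have "x \<in> prime_polydisc 0"
      using \<rho>(2) by (simp add: in_prime_polydisc_0_iff x_def Suc_le_eq)
    then show "(\<lambda>j. x j * of_nat (nth_prime j) powr (-s)) \<in> prime_polydisc (Re s)"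
      using prime_scaled_in_prime_polydisc by fastforce
  qed
  finally show ?thesis .
qed

lemma bohr_transform_nonzero_iff:
  assumes summ: "\<And>\<sigma>. \<sigma> > 0 \<Longrightarrow> dirichlet_abs_summable a \<sigma>"
  shows "(\<forall>z\<in>D0_infty. bohr_transform a z \<noteq> 0) \<longleftrightarrow>
         a 1 \<noteq> 0 \<and> (\<forall>s. Re s > 0 \<longrightarrow> dirichlet_series a s \<noteq> 0)"
proof
  assume nz: "\<forall>z\<in>D0_infty. bohr_transform a z \<noteq> 0"
  have "(\<lambda>_. 0) \<in> D0_infty" by (simp add: D0_infty_def)
  with nz have "bohr_transform a (\<lambda>_. 0) \<noteq> 0" by blast
  then have a1: "a 1 \<noteq> 0" unfolding bohr_transform_zero_point .
  with nz show "a 1 \<noteq> 0 \<and> (\<forall>s. Re s > 0 \<longrightarrow> dirichlet_series a s \<noteq> 0)"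
    using dirichlet_series_nonzero_if_bohr_transform_nonzero[OF summ a1] by blast
next
  assume D: "a 1 \<noteq> 0 \<and> (\<forall>s. Re s > 0 \<longrightarrow> dirichlet_series a s \<noteq> 0)"
  show "\<forall>z\<in>D0_infty. bohr_transform a z \<noteq> 0"
  proof
    fix z assume "z \<in> D0_infty"
    then obtain \<sigma> where "\<sigma> > 0" "z \<in> prime_polydisc \<sigma>"
      by (rule D0_infty_imp_in_prime_polydisc)
    with D show "bohr_transform a z \<noteq> 0"
      by (intro bohr_transform_nonzero_in_prime_polydisc[OF summ]) auto
  qed
qed

theorem lemma2p8:
  fixes a :: "nat \<Rightarrow> complex"
  assumes "abs_conv_abscissa a \<le> 0"
  shows "((\<forall>z\<in>D0_infty. bohr_transform a z \<noteq> 0) \<longleftrightarrow>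
           (a 1 \<noteq> 0 \<and> (\<forall>s. Re s > 0 \<longrightarrow> dirichlet_series a s \<noteq> 0)))
       \<and> ((a 1 \<noteq> 0 \<and> (\<forall>s. Re s > 0 \<longrightarrow> dirichlet_series a s \<noteq> 0)) \<longrightarrow>
           (\<forall>\<rho>. completely_multiplicative \<rho> \<and> (\<forall>n\<ge>1. norm (\<rho> n) \<le> 1) \<longrightarrow>
              (\<forall>s. Re s > 0 \<longrightarrow> dirichlet_series (\<lambda>n. a n * \<rho> n) s \<noteq> 0)))"
proof -
  have summ: "dirichlet_abs_summable a \<sigma>" if "\<sigma> > 0" for \<sigma>
    using assms that by (intro dirichlet_abs_summable_gt_abscissa) (simp add: order.strict_trans1)
  have "dirichlet_series (\<lambda>n. a n * \<rho> n) s \<noteq> 0"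
    if "a 1 \<noteq> 0" "\<forall>s. Re s > 0 \<longrightarrow> dirichlet_series a s \<noteq> 0"
      and "completely_multiplicative \<rho>" "\<forall>n\<ge>1. norm (\<rho> n) \<le> 1" "Re s > 0" for \<rho> s
    using that by (intro dirichlet_series_completely_multiplicative_twist_nonzero[OF summ]) auto
  with bohr_transform_nonzero_iff[OF summ] show ?thesis
    by blast
qed

end
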